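(* Assume the setting described in the context. Let $h\in(0,h_0]$, $N\ge1$, $\Delta t=T/N$, and let $u_1^h,\dots,u_N^h\in V^h_m$ be any solutions of the fully discrete scheme starting from $u_0^h$. Then there exists a positive constant $c$, independent of $h$ and $\Delta t$, such that \[\max_{i=1,\dots,N}\|u_i^h\|^2_{L^2(\Omega;\mathbb{R}^m)}+\sum_{i=1}^N\int_\Omega|u_i^h-u_{i-1}^h|^2\,{\rm d}x+\Delta t\sum_{i=1}^N\int_\Omega a(Du_i^h):Du_i^h\,{\rm d}x\le c\big(\|u_0^h\|^2_{L^2(\Omega;\mathbb{R}^m)}+T\|F\|^2_{L^2(Q_T;\mathbb{R}^m)}\big).\] Moreover $a(\xi):\xi\ge0$ for all $\xi\in\mathbb{R}^{m\times n}$, so every term on the left-hand side is nonnegative, and the right-hand side is bounded above by a constant independent of $h$ and $\Delta t$.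
   Context: Setting: $n,m\ge1$, $T>0$, $\Omega\subset\mathbb{R}^n$ a bounded Lipschitz polytope, $Q_T=(0,T)\times\Omega$; $p_i>\max\{1,\frac{2n}{n+2}\}$ ($i=1,\dots,m$), $p=\min_ip_i$, $q=\max_ip_i$, $q-p<1$, $\hat q=\max\{q,2\}$, $p'=p/(p-1)$; $u_0\in L^2(\Omega;\mathbb{R}^m)$; $F\in L^{p'}(Q_T;\mathbb{R}^m)\cap L^2(Q_T;\mathbb{R}^m)$; $B\in\mathbb{R}^{m\times m}$ constant with $Bv\cdot v\ge0$ for all $v$. $a:\mathbb{R}^{m\times n}\to\mathbb{R}^{m\times n}$ is locally Lipschitz, $a(A)=K(A)A$ with $K$ continuous and $c_0\sum_i(\mu_i^2+|A_i|^2)^{(p_i-2)/2}\le K(A)\le c_1\sum_i(\mu_i^2+|A_i|^2)^{(p_i-2)/2}$, $0<c_0\le c_1$, $A_i$ the $i$-th row of $A$, $\mu_i\in\mathbb{R}$ with $\mu_i\neq0$ if $p_i<2$. $A:B$ is the Frobenius inner product. Finite elements: $\{\mathcal{T}_h\}_{h\in(0,h_0]}$ shape-regular simplicial subdivisions of $\overline\Omega$ of mesh size $h$; $V^h=\{v\in W^{1,\infty}_0(\Omega):v|_\Delta\text{ affine }\forall\Delta\in\mathcal{T}_h\}$, $V^h_m=(V^h)^m$; the $L^2$-orthogonal projector onto $V^h_m$ is stable in $W^{1,\hat q}_0(\Omega;\mathbb{R}^m)$ uniformly in $h$; $u_0^h\in V^h_m$ with $u_0^h\to u_0$ in $L^2(\Omega;\mathbb{R}^m)$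 as $h\to0_+$. Fully discrete scheme: with $t_i=i\Delta t$ and $F_i(x)=\frac{1}{\Delta t}\int_{t_{i-1}}^{t_i}F(t,x)\,{\rm d}t$, given $u_i^h\in V^h_m$ find $u_{i+1}^h\in V^h_m$ with $\int_\Omega\frac{u_{i+1}^h-u_i^h}{\Delta t}\cdot\phi^h+a(Du_{i+1}^h):D\phi^h+Bu_{i+1}^h\cdot\phi^h\,{\rm d}x=\int_\Omega F_{i+1}\cdot\phi^h\,{\rm d}x$ for all $\phi^h\in V^h_m$, $i=0,\dots,N-1$. *)

theory Defs
  imports "HOL-Analysis.Analysis"
begin

text \<open>Real power with the convention b^0 = 1 (Isabelle has 0 powr 0 = 0).\<close>
definition pw :: "real \<Rightarrow> real \<Rightarrow> real" where
  "pw b e = (if e = 0 then 1 else b powr e)"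

definition lipschitz_domain :: "(real^'n) set \<Rightarrow> bool" where
  "lipschitz_domain \<Omega> \<longleftrightarrow> open \<Omega> \<and> bounded \<Omega> \<and> \<Omega> \<noteq> {} \<and>
     (\<forall>x0\<in>frontier \<Omega>. \<exists>r>0. \<exists>e::real^'n. \<exists>g::real^'n \<Rightarrow> real. \<exists>L.
        norm e = 1 \<and> (\<forall>y z. \<bar>g y - g z\<bar> \<le> L * norm (y - z)) \<and>
        \<Omega> \<inter> ball x0 r = {x \<in> ball x0 r. x \<bullet> e < g (x - (x \<bullet> e) *\<^sub>R e)})"

definition lipschitz_polytope :: "(real^'n) set \<Rightarrow> bool" where
  "lipschitz_polytope \<Omega> \<longleftrightarrow> lipschitz_domain \<Omega> \<and>
     (\<exists>\<P>. finite \<P> \<and> (\<forall>P\<in>\<P>. polytope P) \<and> closure \<Omega> = \<Union>\<P>)"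

definition simplicial_subdivision :: "(real^'n) set set \<Rightarrow> (real^'n) set \<Rightarrow> real \<Rightarrow> bool" where
  "simplicial_subdivision \<T> \<Omega> h \<longleftrightarrow> triangulation \<T> \<and> \<T> \<noteq> {} \<and>
     (\<forall>S\<in>\<T>. int CARD('n) simplex S) \<and> \<Union>\<T> = closure \<Omega> \<and>
     h = Max (diameter ` \<T>)"

definition inradius :: "(real^'n) set \<Rightarrow> real" where
  "inradius S = Sup {r. r \<ge> 0 \<and> (\<exists>x. ball x r \<subseteq> S)}"

definition shape_regular_family :: "(real \<Rightarrow> (real^'n) set set) \<Rightarrow> real \<Rightarrow> bool" where
  "shape_regular_family \<T> h0 \<longleftrightarrow>
     (\<exists>\<sigma>. \<forall>h\<in>{0<..h0}. \<forall>S\<in>\<T> h. diameter S \<le> \<sigma> * inradius S)"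

text \<open>V^h: continuous functions on R^n vanishing outside Omega (hence on the boundary;
Lipschitz, i.e. in W^{1,infinity}_0), affine on every simplex.\<close>
definition Vh :: "(real^'n) set set \<Rightarrow> (real^'n) set \<Rightarrow> (real^'n \<Rightarrow> real) \<Rightarrow> bool" where
  "Vh \<T> \<Omega> v \<longleftrightarrow> continuous_on UNIV v \<and> (\<forall>x. x \<notin> \<Omega> \<longrightarrow> v x = 0) \<and>
     (\<forall>S\<in>\<T>. \<exists>b c. \<forall>x\<in>S. v x = b \<bullet> x + c)"

definition Vhm :: "(real^'n) set set \<Rightarrow> (real^'n) set \<Rightarrow> (real^'n \<Rightarrow> real^'m) \<Rightarrow> bool" where
  "Vhm \<T> \<Omega> u \<longleftrightarrow> (\<forall>k. Vh \<T> \<Omega> (\<lambda>x. u x $ k))"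

definition Lp_on :: "'a measure \<Rightarrow> 'a set \<Rightarrow> real \<Rightarrow> ('a \<Rightarrow> 'b::euclidean_space) \<Rightarrow> bool" where
  "Lp_on M A r f \<longleftrightarrow> (\<lambda>x. indicator A x *\<^sub>R f x) \<in> borel_measurable M \<and>
     integrable M (\<lambda>x. indicator A x * norm (f x) powr r)"

definition Lp_norm :: "real \<Rightarrow> (real^'n \<Rightarrow> 'b::euclidean_space) \<Rightarrow> real" where
  "Lp_norm r f = (integral\<^sup>L lebesgue (\<lambda>x. norm (f x) powr r)) powr (1 / r)"

definition L2sq :: "(real^'n) set \<Rightarrow> (real^'n \<Rightarrow> 'b::euclidean_space) \<Rightarrow> real" where
  "L2sq \<Omega> f = (LINT x:\<Omega>|lebesgue. (norm (f x))\<^sup>2)"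

definition C1c :: "(real^'n \<Rightarrow> real) \<Rightarrow> (real^'n \<Rightarrow> real^'n) \<Rightarrow> bool" where
  "C1c \<phi> g \<longleftrightarrow> (\<forall>x. (\<phi> has_derivative (\<lambda>y. g x \<bullet> y)) (at x)) \<and> continuous_on UNIV g \<and>
     (\<exists>C. compact C \<and> (\<forall>x. x \<notin> C \<longrightarrow> \<phi> x = 0))"

text \<open>G is the weak Jacobian of v on R^n: G\$k\$j = weak partial_j of v_k.\<close>
definition weak_jacobian :: "(real^'n \<Rightarrow> real^'m) \<Rightarrow> (real^'n \<Rightarrow> real^'n^'m) \<Rightarrow> bool" where
  "weak_jacobian v G \<longleftrightarrow> (\<forall>k j \<phi> g. C1c \<phi> g \<longrightarrow>
     integrable lebesgue (\<lambda>x. v x $ k * g x $ j) \<and> integrable lebesgue (\<lambda>x. G x $ k $ j * \<phi> x) \<and>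
     integral\<^sup>L lebesgue (\<lambda>x. v x $ k * g x $ j) = - integral\<^sup>L lebesgue (\<lambda>x. G x $ k $ j * \<phi> x))"

text \<open>W^{1,r}_0(Omega;R^m), realised by zero extension to R^n.\<close>
definition W10 :: "(real^'n) set \<Rightarrow> real \<Rightarrow> (real^'n \<Rightarrow> real^'m) \<Rightarrow> bool" where
  "W10 \<Omega> r v \<longleftrightarrow> (\<forall>x. x \<notin> \<Omega> \<longrightarrow> v x = 0) \<and> Lp_on lebesgue UNIV r v \<and>
     (\<exists>G. weak_jacobian v G \<and> Lp_on lebesgue UNIV r G)"

definition projection_stable ::
  "(real^'n) set \<Rightarrow> (real \<Rightarrow> (real^'n) set set) \<Rightarrow> real \<Rightarrow> real \<Rightarrow> (real^'m) itself \<Rightarrow> bool" where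
  "projection_stable \<Omega> \<T> h0 r _ \<longleftrightarrow> (\<exists>C. \<forall>h\<in>{0<..h0}. \<forall>(v::real^'n \<Rightarrow> real^'m) G w Gw.
      W10 \<Omega> r v \<and> weak_jacobian v G \<and> Lp_on lebesgue UNIV r G \<and>
      Vhm (\<T> h) \<Omega> w \<and>
      (\<forall>\<phi>. Vhm (\<T> h) \<Omega> \<phi> \<longrightarrow> (LINT x:\<Omega>|lebesgue. (v x - w x) \<bullet> \<phi> x) = 0) \<and>
      weak_jacobian w Gw
      \<longrightarrow> Lp_norm r w + Lp_norm r Gw \<le> C * (Lp_norm r v + Lp_norm r G))"

definition F_avg :: "(real \<Rightarrow> real^'n \<Rightarrow> real^'m) \<Rightarrow> real \<Rightarrow> nat \<Rightarrow> real^'n \<Rightarrow> real^'m" where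
  "F_avg F dt i x = (1 / dt) *\<^sub>R (LINT t:{(real i - 1) * dt .. real i * dt}|lborel. F t x)"

definition fd_scheme ::
  "(real^'n) set set \<Rightarrow> (real^'n) set \<Rightarrow> (real^'n^'m \<Rightarrow> real^'n^'m) \<Rightarrow> real^'m^'m \<Rightarrow>
   (real \<Rightarrow> real^'n \<Rightarrow> real^'m) \<Rightarrow> real \<Rightarrow> nat \<Rightarrow> (nat \<Rightarrow> real^'n \<Rightarrow> real^'m) \<Rightarrow> bool" where
  "fd_scheme \<T> \<Omega> a B F dt N u \<longleftrightarrow> (\<forall>i<N. \<forall>\<phi>. Vhm \<T> \<Omega> \<phi> \<longrightarrow>
     (LINT x:\<Omega>|lebesgue. ((1 / dt) *\<^sub>R (u (Suc i) x - u i x)) \<bullet> \<phi> x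
        + a (jacobian (u (Suc i)) (at x)) \<bullet> jacobian \<phi> (at x)
        + (B *v u (Suc i) x) \<bullet> \<phi> x)
     = (LINT x:\<Omega>|lebesgue. F_avg F dt (Suc i) x \<bullet> \<phi> x))"

definition QT :: "real \<Rightarrow> (real^'n) set \<Rightarrow> (real \<times> (real^'n)) set" where
  "QT T \<Omega> = {(t, x). 0 < t \<and> t < T \<and> x \<in> \<Omega>}"

end

theory Submission
  imports Defs
begin

text \<open>Testing the scheme with the new iterate \<open>u\<^sub>i\<close> and using
\<open>2 (u\<^sub>i - u\<^sub>i\<^sub>-\<^sub>1) \<cdot> u\<^sub>i = |u\<^sub>i|\<^sup>2 - |u\<^sub>i\<^sub>-\<^sub>1|\<^sup>2 + |u\<^sub>i - u\<^sub>i\<^sub>-\<^sub>1|\<^sup>2\<close>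
together with \<open>a(\<xi>) : \<xi> \<ge> 0\<close> and \<open>B v \<cdot> v \<ge> 0\<close> gives a one-step energy inequality.
The time-averaged forcing is split by Young's inequality with weight \<open>2T\<close>: one part is \<open>T\<close> times
the \<open>L\<^sup>2\<close> norm of \<open>F\<close> on the current time slab, the other is the fraction \<open>\<Delta>t/(2T)\<close> of the
new energy. Summing over the steps, the accumulated fractions amount to at most half of the maximal
energy because \<open>N \<Delta>t = T\<close>, so they can be absorbed, which gives the bound with \<open>c = 8\<close>.
Nonnegativity of \<open>a(\<xi>) : \<xi>\<close> comes from \<open>K \<ge> 0\<close>, and the initial energies stay bounded
because \<open>u\<^sub>0\<^sup>h \<rightarrow> u\<^sub>0\<close> in \<open>L\<^sup>2\<close>.\<close>

lemma set_integrable_continuous_on_bounded: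
  fixes f :: "'a::euclidean_space \<Rightarrow> 'b::{banach, second_countable_topology}"
  assumes "continuous_on UNIV f" "bounded \<Omega>" "\<Omega> \<in> sets lebesgue"
  shows "set_integrable lebesgue \<Omega> f"
proof -
  have "integrable lborel (\<lambda>x. indicator (closure \<Omega>) x *\<^sub>R f x)"
    by (rule borel_integrable_compact)
      (auto simp: compact_closure assms intro: continuous_on_subset[OF assms(1)])
  hence "set_integrable lebesgue (closure \<Omega>) f"
    unfolding set_integrable_def using integrable_completion borel_measurable_integrable by blast
  thus ?thesis by (rule set_integrable_subset) (auto simp: assms closure_subset)
qed

lemma set_integrable_indicator_bounded_continuous_on:
  fixes f :: "'a::euclidean_space \<Rightarrow> real"
  assumes E: "open E" "continuous_on E f" and bnd: "\<And>x. x \<in> E \<Longrightarrow> \<bar>f x\<bar> \<le> C"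
    and lm: "\<Omega> \<in> lmeasurable"
  shows "set_integrable lebesgue \<Omega> (\<lambda>x. indicator E x * f x)"
proof -
  have "(\<lambda>x. indicator E x *\<^sub>R f x) \<in> borel_measurable borel"
    using E by (intro borel_measurable_continuous_on_indicator) auto
  hence "(\<lambda>x. indicator E x * f x) \<in> borel_measurable lebesgue"
    by (intro measurable_completion) (simp add: measurable_lborel1)
  moreover have "(indicator \<Omega> :: _ \<Rightarrow> real) \<in> borel_measurable lebesgue"
    using lm by (auto simp: fmeasurable_def)
  ultimately have meas: "(\<lambda>x. indicator \<Omega> x *\<^sub>R (indicator E x * f x)) \<in> borel_measurable lebesgue"
    by (rule borel_measurable_scaleR[rotated])
  have bound_int: "integrable lebesgue (\<lambda>x. indicator \<Omega> x * \<bar>C\<bar>)"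
    using lm by (intro integrable_mult_left integrable_real_indicator) (auto simp: fmeasurable_def)
  have "norm (indicator \<Omega> x *\<^sub>R (indicator E x * f x)) \<le> norm (indicator \<Omega> x * \<bar>C\<bar>)" for x
    using bnd[of x] by (auto simp: indicator_def)
  thus ?thesis
    using Bochner_Integration.integrable_bound[OF bound_int meas] unfolding set_integrable_def by blast
qed

lemma set_integrable_piecewise_constant:
  fixes f :: "'a::euclidean_space \<Rightarrow> real"
  assumes fin: "finite \<T>" and cv: "\<forall>S\<in>\<T>. convex S" and cov: "\<Omega> \<subseteq> \<Union>\<T>"
    and const: "\<And>S. S \<in> \<T> \<Longrightarrow> \<exists>c. \<forall>x\<in>interior S. f x = c"
    and lm: "\<Omega> \<in> lmeasurable"
  shows "set_integrable lebesgue \<Omega> f"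
proof -
  obtain c where c: "\<And>S x. S \<in> \<T> \<Longrightarrow> x \<in> interior S \<Longrightarrow> f x = c S"
    using const by metis
  define E where "E = \<Union>(interior ` \<T>)"
  have "open E" by (auto simp: E_def)
  moreover have "continuous_on E f" unfolding E_def
  proof (rule continuous_on_open_Union)
    fix s assume "s \<in> interior ` \<T>"
    then obtain S where S: "S \<in> \<T>" "s = interior S" by auto
    show "open s" using S by auto
    have "continuous_on s (\<lambda>x. c S)" by simp
    thus "continuous_on s f" by (rule continuous_on_cong[THEN iffD1, rotated 2]) (use S c in auto)
  qed
  moreover have "\<bar>f x\<bar> \<le> (\<Sum>S\<in>\<T>. \<bar>c S\<bar>)" if "x \<in> E" for x
  proof -
    obtain S where S: "S \<in> \<T>" "x \<in> interior S" using \<open>x \<in> E\<close> unfolding E_def by auto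
    have "\<bar>f x\<bar> = \<bar>c S\<bar>" using c S by simp
    also have "\<dots> \<le> (\<Sum>S\<in>\<T>. \<bar>c S\<bar>)" using S fin by (intro member_le_sum) auto
    finally show ?thesis .
  qed
  ultimately have "(\<lambda>x. indicator E x * f x) absolutely_integrable_on \<Omega>"
    using set_integrable_indicator_bounded_continuous_on[OF _ _ _ lm] by (simp add: set_integrable_def) blast
  moreover have "negligible (\<Union>(frontier ` \<T>))"
    using fin cv by (intro negligible_Union) (auto intro: negligible_convex_frontier)
  ultimately have "f absolutely_integrable_on \<Omega>"
  proof (rule absolutely_integrable_spike)
    fix x assume x: "x \<in> \<Omega> - \<Union>(frontier ` \<T>)"
    then obtain S where S: "S \<in> \<T>" "x \<in> S" using cov by auto
    hence "x \<in> interior S" using x closure_subset[of S] by (auto simp: frontier_def)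
    hence "x \<in> E" using S by (auto simp: E_def)
    thus "f x = indicator E x * f x" by simp
  qed
  thus ?thesis by simp
qed

lemma Vhm_continuous:
  assumes "Vhm \<T> \<Omega> u" shows "continuous_on UNIV u"
proof -
  have "\<And>k. continuous_on UNIV (\<lambda>x. u x $ k)" using assms by (simp add: Vhm_def Vh_def)
  hence "continuous_on UNIV (\<lambda>x. \<chi> k. u x $ k)" by (intro continuous_on_vec_lambda)
  thus ?thesis by simp
qed

lemma Vhm_jacobian_constant_on_interior:
  fixes u :: "real^'n \<Rightarrow> real^'m"
  assumes "Vhm \<T> \<Omega> u" "S \<in> \<T>"
  shows "\<exists>M. \<forall>x\<in>interior S. jacobian u (at x) = M"
proof -
  have "\<forall>k. \<exists>b c. \<forall>x\<in>S. u x $ k = b \<bullet> x + c" using assms by (auto simp: Vhm_def Vh_def)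
  then obtain b c where bc: "\<And>k x. x \<in> S \<Longrightarrow> u x $ k = b k \<bullet> x + c k" by metis
  define A :: "real^'n^'m" where "A = (\<chi> k j. b k $ j)"
  have affine: "u x = A *v x + (\<chi> k. c k)" if "x \<in> S" for x
    using that by (simp add: vec_eq_iff bc A_def matrix_vector_mult_def inner_vec_def mult.commute)
  have "jacobian u (at x) = A" if x: "x \<in> interior S" for x
  proof -
    have "((\<lambda>y. A *v y + (\<chi> k. c k)) has_derivative (*v) A) (at x)"
      by (intro has_derivative_add_const bounded_linear_imp_has_derivative matrix_vector_mul_bounded_linear)
    moreover have "A *v y + (\<chi> k. c k) = u y" if "y \<in> interior S" for y
      using affine interior_subset that by (metis subsetD)
    ultimately have "(u has_derivative (*v) A) (at x)"
      using has_derivative_transform_within_open[OF _ open_interior x] by blast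
    thus ?thesis
      by (simp add: jacobian_def frechet_derivative_at[symmetric] matrix_of_matrix_vector_mul)
  qed
  thus ?thesis by blast
qed

lemma Vhm_jacobian_set_integrable:
  fixes u :: "real^'n \<Rightarrow> real^'m" and g :: "real^'n^'m \<Rightarrow> real"
  assumes "Vhm \<T> \<Omega> u" "finite \<T>" "\<forall>S\<in>\<T>. convex S" "\<Omega> \<subseteq> \<Union>\<T>" "\<Omega> \<in> lmeasurable"
  shows "set_integrable lebesgue \<Omega> (\<lambda>x. g (jacobian u (at x)))"
  by (rule set_integrable_piecewise_constant[OF assms(2-4) _ assms(5)])
    (metis Vhm_jacobian_constant_on_interior[OF assms(1)])

lemma double_inner_diff_left:
  fixes w v :: "'a::real_inner"
  shows "2 * ((w - v) \<bullet> w) = (norm w)\<^sup>2 - (norm v)\<^sup>2 + (norm (w - v))\<^sup>2"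
  unfolding power2_norm_eq_inner by (simp add: inner_diff_left inner_diff_right inner_commute[of v w])

lemma young_inner:
  fixes y w :: "'a::real_inner"
  assumes "lam > 0"
  shows "2 * (y \<bullet> w) \<le> lam * (norm y)\<^sup>2 + (norm w)\<^sup>2 / lam"
proof -
  have "0 \<le> (norm (lam *\<^sub>R y - w))\<^sup>2" by simp
  also have "\<dots> = lam\<^sup>2 * (norm y)\<^sup>2 - 2 * lam * (y \<bullet> w) + (norm w)\<^sup>2"
    unfolding power2_norm_eq_inner
    by (simp add: inner_diff_left inner_diff_right inner_commute[of w y] power2_eq_square algebra_simps)
  finally have "2 * lam * (y \<bullet> w) \<le> lam * (lam * (norm y)\<^sup>2 + (norm w)\<^sup>2 / lam)"
    using assms by (simp add: algebra_simps power2_eq_square)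
  thus ?thesis using assms by (simp add: mult.assoc)
qed

lemma L2sq_nonneg: "0 \<le> L2sq \<Omega> f"
  unfolding L2sq_def set_lebesgue_integral_def by (intro integral_nonneg_AE AE_I2) simp

lemma implicit_euler_energy_step:
  fixes w v Fa :: "real^'n \<Rightarrow> real^'m" and B :: "real^'m^'m" and D :: "real^'n \<Rightarrow> real"
  assumes wc: "continuous_on UNIV w" and vc: "continuous_on UNIV v"
    and bd: "bounded \<Omega>" and Om: "\<Omega> \<in> sets lebesgue" and dt: "dt > 0"
    and B_mon: "\<And>y. (B *v y) \<bullet> y \<ge> 0" and D_int: "set_integrable lebesgue \<Omega> D"
    and eq: "(LINT x:\<Omega>|lebesgue. ((1 / dt) *\<^sub>R (w x - v x)) \<bullet> w x + D x + (B *v w x) \<bullet> w x)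
           = (LINT x:\<Omega>|lebesgue. Fa x \<bullet> w x)"
  shows "L2sq \<Omega> w - L2sq \<Omega> v + L2sq \<Omega> (\<lambda>x. w x - v x) + 2 * dt * (LINT x:\<Omega>|lebesgue. D x)
     \<le> 2 * dt * (LINT x:\<Omega>|lebesgue. Fa x \<bullet> w x)"
proof -
  have cont_int: "set_integrable lebesgue \<Omega> g" if "continuous_on UNIV g" for g :: "real^'n \<Rightarrow> real"
    using set_integrable_continuous_on_bounded[OF that bd Om] .
  have Bw: "continuous_on UNIV (\<lambda>x. B *v w x)"
    using continuous_on_compose[OF wc matrix_vector_mult_linear_continuous_on[of "range w" B]]
    by (simp add: o_def)
  define E where "E = (\<lambda>x. (norm (w x))\<^sup>2 - (norm (v x))\<^sup>2 + (norm (w x - v x))\<^sup>2)"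
  have iE: "set_integrable lebesgue \<Omega> E"
    unfolding E_def using wc vc by (intro cont_int continuous_intros) auto
  have iB: "set_integrable lebesgue \<Omega> (\<lambda>x. (B *v w x) \<bullet> w x)"
    using wc Bw by (intro cont_int continuous_intros) auto
  have E_int: "(LINT x:\<Omega>|lebesgue. E x) = L2sq \<Omega> w - L2sq \<Omega> v + L2sq \<Omega> (\<lambda>x. w x - v x)"
  proof -
    have "set_integrable lebesgue \<Omega> (\<lambda>x. (norm (w x))\<^sup>2)" "set_integrable lebesgue \<Omega> (\<lambda>x. (norm (v x))\<^sup>2)"
      "set_integrable lebesgue \<Omega> (\<lambda>x. (norm (w x - v x))\<^sup>2)"
      using wc vc by (auto intro!: cont_int continuous_intros)
    thus ?thesis unfolding E_def L2sq_def by (simp add: set_integral_add set_integral_diff)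
  qed
  have "((1 / dt) *\<^sub>R (w x - v x)) \<bullet> w x = E x / (2 * dt)" for x
    unfolding inner_scaleR_left E_def double_inner_diff_left[symmetric] using dt by simp
  hence "(LINT x:\<Omega>|lebesgue. Fa x \<bullet> w x)
      = (LINT x:\<Omega>|lebesgue. E x / (2 * dt) + D x + (B *v w x) \<bullet> w x)"
    by (simp add: eq[symmetric])
  also have "\<dots> = (LINT x:\<Omega>|lebesgue. E x) / (2 * dt) + (LINT x:\<Omega>|lebesgue. D x)
      + (LINT x:\<Omega>|lebesgue. (B *v w x) \<bullet> w x)"
    using iE D_int iB by (simp add: set_integral_add set_integral_divide_zero)
  finally have "2 * dt * (LINT x:\<Omega>|lebesgue. Fa x \<bullet> w x) = (LINT x:\<Omega>|lebesgue. E x)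
      + 2 * dt * (LINT x:\<Omega>|lebesgue. D x) + 2 * dt * (LINT x:\<Omega>|lebesgue. (B *v w x) \<bullet> w x)"
    using dt by (simp add: field_simps)
  moreover have "0 \<le> 2 * dt * (LINT x:\<Omega>|lebesgue. (B *v w x) \<bullet> w x)"
    unfolding set_lebesgue_integral_def using B_mon dt by (intro mult_nonneg_nonneg integral_nonneg_AE AE_I2) auto
  ultimately show ?thesis unfolding E_int by linarith
qed

lemma interval_integral_inner_le:
  fixes f :: "real \<Rightarrow> 'b::euclidean_space" and w :: 'b
  assumes ab: "a < b" and lam: "lam > 0"
    and meas: "(\<lambda>t. indicator {a<..<b} t *\<^sub>R f t) \<in> borel_measurable lborel"
    and sq_int: "integrable lborel (\<lambda>t. indicator {a<..<b} t * (norm (f t))\<^sup>2)"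
  shows "(LINT t:{a..b}|lborel. f t) \<bullet> w
    \<le> lam / 2 * (\<integral>t. indicator {a<..<b} t * (norm (f t))\<^sup>2 \<partial>lborel) + (b - a) * ((norm w)\<^sup>2 / (2 * lam))"
proof -
  define H where "H = (\<lambda>t. indicator {a<..<b} t *\<^sub>R f t)"
  have ind_int: "integrable lborel (indicator {a<..<b} :: real \<Rightarrow> real)"
    using ab by (intro integrable_real_indicator) (auto simp: emeasure_lborel_Ioo)
  have bound_int: "integrable lborel (\<lambda>t. indicator {a<..<b} t + indicator {a<..<b} t * (norm (f t))\<^sup>2)"
    using ind_int sq_int by (rule Bochner_Integration.integrable_add)
  have bound: "norm (H t) \<le> norm (indicator {a<..<b} t + indicator {a<..<b} t * (norm (f t))\<^sup>2)" for t
  proof -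
    have "0 \<le> (norm (f t) - 1 / 2)\<^sup>2" by simp
    hence "norm (f t) \<le> 1 + (norm (f t))\<^sup>2" by (simp add: power2_eq_square algebra_simps)
    thus ?thesis by (simp add: H_def indicator_def)
  qed
  have H_int: "integrable lborel H"
    using Bochner_Integration.integrable_bound[OF bound_int meas[folded H_def] AE_I2[OF bound]] .
  define H' where "H' = (\<lambda>t. indicator {a..b} t *\<^sub>R f t)"
  \<comment> \<open>measurable because it agrees with \<open>H\<close> off the two endpoints\<close>
  have H'_eq: "H' = (\<lambda>t. if t = a then H' a else if t = b then H' b else H t)"
    by (auto simp: H'_def H_def indicator_def fun_eq_iff)
  have mH': "H' \<in> borel_measurable lborel"
    using meas[folded H_def] by (subst H'_eq, intro measurable_If measurable_const) auto
  have ae: "AE t in lborel. H' t = H t"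
    using AE_lborel_singleton[of a] AE_lborel_singleton[of b] by eventually_elim (subst H'_eq, auto)
  have "(LINT t:{a..b}|lborel. f t) = integral\<^sup>L lborel H"
    unfolding set_lebesgue_integral_def H'_def[symmetric]
    using integral_cong_AE[OF mH' meas[folded H_def] ae] .
  hence "(LINT t:{a..b}|lborel. f t) \<bullet> w = (\<integral>t. H t \<bullet> w \<partial>lborel)"
    using H_int by simp
  also have "\<dots> \<le> (\<integral>t. lam / 2 * (indicator {a<..<b} t * (norm (f t))\<^sup>2)
                    + indicator {a<..<b} t * ((norm w)\<^sup>2 / (2 * lam)) \<partial>lborel)"
  proof (rule integral_mono)
    show "integrable lborel (\<lambda>t. H t \<bullet> w)" using H_int by (rule integrable_inner_left)
    show "integrable lborel (\<lambda>t. lam / 2 * (indicator {a<..<b} t * (norm (f t))\<^sup>2)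
                    + indicator {a<..<b} t * ((norm w)\<^sup>2 / (2 * lam)))"
      using sq_int ind_int by (intro Bochner_Integration.integrable_add integrable_mult_right integrable_mult_left)
    fix t
    have "2 * (f t \<bullet> w) \<le> lam * (norm (f t))\<^sup>2 + (norm w)\<^sup>2 / lam" by (rule young_inner[OF lam])
    thus "H t \<bullet> w \<le> lam / 2 * (indicator {a<..<b} t * (norm (f t))\<^sup>2)
                    + indicator {a<..<b} t * ((norm w)\<^sup>2 / (2 * lam))"
      using lam by (auto simp: H_def indicator_def field_simps)
  qed
  also have "\<dots> = lam / 2 * (\<integral>t. indicator {a<..<b} t * (norm (f t))\<^sup>2 \<partial>lborel) + (b - a) * ((norm w)\<^sup>2 / (2 * lam))"
    using sq_int ind_int ab by (subst Bochner_Integration.integral_add) (auto simp: measure_lborel_Ioo)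
  finally show ?thesis .
qed

lemma partial_integral_le_product_integral:
  fixes Phi :: "real \<times> 'a::euclidean_space \<Rightarrow> real"
  assumes int: "integrable (lborel \<Otimes>\<^sub>M lborel) Phi" and nn: "\<And>z. 0 \<le> Phi z"
    and Om: "\<Omega> \<in> sets lebesgue"
  shows "AE x in lborel. integrable lborel (\<lambda>t. Phi (t, x))"
    and "set_integrable lebesgue \<Omega> (\<lambda>x. \<integral>t. Phi (t, x) \<partial>lborel)"
    and "(LINT x:\<Omega>|lebesgue. \<integral>t. Phi (t, x) \<partial>lborel) \<le> integral\<^sup>L (lborel \<Otimes>\<^sub>M lborel) Phi"
proof -
  define g where "g = (\<lambda>x. \<integral>t. Phi (t, x) \<partial>lborel)"
  have swap: "integrable (lborel \<Otimes>\<^sub>M lborel) (\<lambda>(x::'a, t::real). Phi (t, x))"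
    using lborel_pair.integrable_product_swap[OF int] .
  show "AE x in lborel. integrable lborel (\<lambda>t. Phi (t, x))"
    using lborel_pair.AE_integrable_fst'[OF swap] by simp
  have g_int: "integrable lborel g"
    unfolding g_def using lborel_pair.integrable_fst'[OF swap] by simp
  have "integral\<^sup>L lborel g = integral\<^sup>L (lborel \<Otimes>\<^sub>M lborel) Phi"
    unfolding g_def using lborel_pair.integral_fst'[OF swap]
      lborel_pair.integral_product_swap[OF borel_measurable_integrable[OF int]] by simp
  hence g_eq: "integral\<^sup>L lebesgue g = integral\<^sup>L (lborel \<Otimes>\<^sub>M lborel) Phi"
    using integral_completion[OF borel_measurable_integrable[OF g_int]] by simp
  have g_leb: "integrable lebesgue g"
    using g_int integrable_completion borel_measurable_integrable by blast
  have g_nn: "0 \<le> g x" for x unfolding g_def using nn by (intro integral_nonneg_AE) simp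
  show "set_integrable lebesgue \<Omega> g"
    unfolding set_integrable_def using integrable_mult_indicator[OF Om g_leb] .
  hence "(LINT x:\<Omega>|lebesgue. g x) \<le> integral\<^sup>L lebesgue g"
    unfolding set_lebesgue_integral_def set_integrable_def
    using g_leb g_nn by (intro integral_mono) (auto simp: indicator_def)
  thus "(LINT x:\<Omega>|lebesgue. g x) \<le> integral\<^sup>L (lborel \<Otimes>\<^sub>M lborel) Phi" using g_eq by simp
qed

lemma F_avg_inner_le:
  fixes F :: "real \<Rightarrow> real^'n \<Rightarrow> real^'m" and w :: "real^'m" and T :: real and \<Omega> :: "(real^'n) set"
  assumes meas: "(\<lambda>z. indicator (QT T \<Omega>) z *\<^sub>R (case z of (t, x) \<Rightarrow> F t x))
      \<in> borel_measurable (lborel \<Otimes>\<^sub>M lborel)"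
    and x: "x \<in> \<Omega>" and i: "1 \<le> i" and dt: "dt > 0" and iT: "real i * dt \<le> T" and lam: "lam > 0"
    and sq_int: "integrable lborel (\<lambda>t. indicator {(real i - 1) * dt<..<real i * dt} t * (norm (F t x))\<^sup>2)"
  shows "F_avg F dt i x \<bullet> w
    \<le> lam / (2 * dt) * (\<integral>t. indicator {(real i - 1) * dt<..<real i * dt} t * (norm (F t x))\<^sup>2 \<partial>lborel)
      + (norm w)\<^sup>2 / (2 * lam)"
proof -
  define a where "a = (real i - 1) * dt"
  define b where "b = real i * dt"
  have ab: "0 \<le> a" "a < b" "b \<le> T" "b - a = dt"
    using i dt iT by (auto simp: a_def b_def algebra_simps)
  have in_QT: "(t, x) \<in> QT T \<Omega>" if "t \<in> {a<..<b}" for t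
    using that ab x by (auto simp: QT_def)
  have "(\<lambda>t. indicator (QT T \<Omega>) (t, x) *\<^sub>R F t x) \<in> borel_measurable lborel"
    using measurable_compose[OF measurable_Pair2'[of x lborel lborel] meas] by simp
  hence "(\<lambda>t. indicator {a<..<b} t *\<^sub>R (indicator (QT T \<Omega>) (t, x) *\<^sub>R F t x)) \<in> borel_measurable lborel"
    by (rule borel_measurable_scaleR[OF borel_measurable_indicator, rotated]) simp
  moreover have "(\<lambda>t. indicator {a<..<b} t *\<^sub>R (indicator (QT T \<Omega>) (t, x) *\<^sub>R F t x))
      = (\<lambda>t. indicator {a<..<b} t *\<^sub>R F t x)"
    using in_QT by (auto simp: indicator_def fun_eq_iff)
  ultimately have "(\<lambda>t. indicator {a<..<b} t *\<^sub>R F t x) \<in> borel_measurable lborel"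
    by (simp only:)
  from interval_integral_inner_le[OF ab(2) lam this sq_int[folded a_def b_def], of w] ab(4)
  have "(LINT t:{a..b}|lborel. F t x) \<bullet> w
      \<le> lam / 2 * (\<integral>t. indicator {a<..<b} t * (norm (F t x))\<^sup>2 \<partial>lborel) + dt * ((norm w)\<^sup>2 / (2 * lam))"
    by simp
  thus ?thesis using dt by (simp add: F_avg_def a_def b_def field_simps)
qed

lemma F_avg_inner_set_integral_le:
  fixes F :: "real \<Rightarrow> real^'n \<Rightarrow> real^'m" and w :: "real^'n \<Rightarrow> real^'m"
    and T :: real and \<Omega> :: "(real^'n) set"
  defines "Phi \<equiv> \<lambda>z. indicator (QT T \<Omega>) z * (norm (F (fst z) (snd z)))\<^sup>2"
  assumes meas: "(\<lambda>z. indicator (QT T \<Omega>) z *\<^sub>R (case z of (t, x) \<Rightarrow> F t x))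
      \<in> borel_measurable (lborel \<Otimes>\<^sub>M lborel)"
    and Phi_int: "integrable (lborel \<Otimes>\<^sub>M lborel) Phi"
    and wc: "continuous_on UNIV w" and bd: "bounded \<Omega>" and Om: "\<Omega> \<in> sets lebesgue"
    and i: "1 \<le> i" and dt: "dt > 0" and iT: "real i * dt \<le> T" and lam: "lam > 0"
  shows "(LINT x:\<Omega>|lebesgue. F_avg F dt i x \<bullet> w x)
    \<le> lam / (2 * dt) * (\<integral>z. indicator ({(real i - 1) * dt<..<real i * dt} \<times> UNIV) z * Phi z
                          \<partial>(lborel \<Otimes>\<^sub>M lborel))
      + L2sq \<Omega> w / (2 * lam)"
proof -
  define I where "I = {(real i - 1) * dt<..<real i * dt}"
  define Phii where "Phii = (\<lambda>z. indicator (I \<times> (UNIV :: (real^'n) set)) z * Phi z)"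
  have Phii_int: "integrable (lborel \<Otimes>\<^sub>M lborel) Phii"
    unfolding Phii_def using integrable_real_mult_indicator[OF _ Phi_int, of "I \<times> UNIV"]
    by (simp add: I_def mult.commute)
  have Phii_nn: "0 \<le> Phii z" for z by (simp add: Phii_def Phi_def)
  have "0 \<le> (real i - 1) * dt" using i dt by simp
  hence "(t, x) \<in> QT T \<Omega>" if "t \<in> I" "x \<in> \<Omega>" for t x
    using that iT by (auto simp: I_def QT_def)
  hence Phii_x: "Phii (t, x) = indicator I t * (norm (F t x))\<^sup>2" if "x \<in> \<Omega>" for t x
    using that by (auto simp: Phii_def Phi_def indicator_def)
  define g where "g = (\<lambda>x. \<integral>t. Phii (t, x) \<partial>lborel)"
  have g_nn: "0 \<le> g x" for x
    unfolding g_def using Phii_nn by (intro integral_nonneg_AE) simp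
  note g_facts = partial_integral_le_product_integral[OF Phii_int Phii_nn Om, folded g_def]
  have pointwise: "AE x in lborel. x \<in> \<Omega> \<longrightarrow>
      F_avg F dt i x \<bullet> w x \<le> lam / (2 * dt) * g x + (norm (w x))\<^sup>2 / (2 * lam)"
    using g_facts(1)
  proof eventually_elim
    case (elim x)
    show ?case
    proof
      assume x: "x \<in> \<Omega>"
      with elim have "integrable lborel (\<lambda>t. indicator I t * (norm (F t x))\<^sup>2)" by (simp add: Phii_x)
      from F_avg_inner_le[OF meas x i dt iT lam this[unfolded I_def], of "w x"]
      show "F_avg F dt i x \<bullet> w x \<le> lam / (2 * dt) * g x + (norm (w x))\<^sup>2 / (2 * lam)"
        by (simp add: g_def Phii_x[OF x] I_def)
    qed
  qed
  define r where "r = (\<lambda>x. lam / (2 * dt) * g x + (norm (w x))\<^sup>2 / (2 * lam))"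
  have w_int: "set_integrable lebesgue \<Omega> (\<lambda>x. (norm (w x))\<^sup>2)"
    using wc by (intro set_integrable_continuous_on_bounded bd Om continuous_intros)
  have r_int: "set_integrable lebesgue \<Omega> r"
    unfolding r_def using g_facts(2) w_int
    by (intro set_integral_add(1) set_integrable_mult_right set_integrable_divide)
  have "(LINT x:\<Omega>|lebesgue. F_avg F dt i x \<bullet> w x) \<le> (LINT x:\<Omega>|lebesgue. r x)"
    unfolding set_lebesgue_integral_def
  proof (rule integral_mono_AE')
    show "integrable lebesgue (\<lambda>x. indicator \<Omega> x *\<^sub>R r x)"
      using r_int by (simp add: set_integrable_def)
    show "AE x in lebesgue. indicator \<Omega> x *\<^sub>R (F_avg F dt i x \<bullet> w x) \<le> indicator \<Omega> x *\<^sub>R r x"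
      using AE_completion[OF pointwise] by (auto elim!: eventually_mono simp: indicator_def r_def)
    show "AE x in lebesgue. 0 \<le> indicator \<Omega> x *\<^sub>R r x"
      using g_nn lam dt by (intro AE_I2) (simp add: r_def indicator_def)
  qed
  also have "\<dots> = lam / (2 * dt) * (LINT x:\<Omega>|lebesgue. g x) + L2sq \<Omega> w / (2 * lam)"
    unfolding r_def L2sq_def using g_facts(2) w_int
    by (simp add: set_integral_add set_integral_mult_right set_integral_divide_zero)
  also have "\<dots> \<le> lam / (2 * dt) * integral\<^sup>L (lborel \<Otimes>\<^sub>M lborel) Phii + L2sq \<Omega> w / (2 * lam)"
    using g_facts(3) lam dt by (intro add_right_mono mult_left_mono) auto
  finally show ?thesis by (simp add: Phii_def I_def)
qed

lemma sum_indicator_time_slabs_le_1: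
  fixes dt t :: real
  assumes dt: "dt > 0"
  shows "(\<Sum>i=1..N. indicator {(real i - 1) * dt<..<real i * dt} t) \<le> (1::real)"
proof -
  have unique: "i = j" if "t \<in> {(real i - 1) * dt<..<real i * dt}" "t \<in> {(real j - 1) * dt<..<real j * dt}"
    for i j :: nat
  proof -
    have "(real i - 1) * dt < real j * dt" "(real j - 1) * dt < real i * dt" using that by auto
    hence "real i - 1 < real j" "real j - 1 < real i" using dt by (simp_all add: mult_less_cancel_right_pos)
    thus ?thesis by linarith
  qed
  have "(\<Sum>i=1..N. indicator {(real i - 1) * dt<..<real i * dt} t)
      = real (card ({1..N} \<inter> {i. (real i - 1) * dt < t \<and> t < real i * dt}))"
    by (simp add: indicator_def sum.If_cases)
  also have "card ({1..N} \<inter> {i. (real i - 1) * dt < t \<and> t < real i * dt}) \<le> Suc 0"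
    using unique by (subst card_le_Suc0_iff_eq) auto
  finally show ?thesis by simp
qed

lemma sum_time_slab_integrals_le:
  fixes Phi :: "real \<times> 'a::euclidean_space \<Rightarrow> real"
  assumes int: "integrable (lborel \<Otimes>\<^sub>M lborel) Phi" and nn: "\<And>z. 0 \<le> Phi z" and dt: "dt > 0"
  shows "(\<Sum>i=1..N. \<integral>z. indicator ({(real i - 1) * dt<..<real i * dt} \<times> UNIV) z * Phi z
            \<partial>(lborel \<Otimes>\<^sub>M lborel))
    \<le> integral\<^sup>L (lborel \<Otimes>\<^sub>M lborel) Phi"
proof -
  define slab where "slab i = {(real i - 1) * dt<..<real i * dt} \<times> (UNIV :: 'a set)" for i :: nat
  have slab_int: "integrable (lborel \<Otimes>\<^sub>M lborel) (\<lambda>z. indicator (slab i) z * Phi z)" for i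
    using integrable_real_mult_indicator[OF _ int, of "slab i"] by (simp add: slab_def mult.commute)
  have "(\<Sum>i=1..N. \<integral>z. indicator (slab i) z * Phi z \<partial>(lborel \<Otimes>\<^sub>M lborel))
      = (\<integral>z. (\<Sum>i=1..N. indicator (slab i) z) * Phi z \<partial>(lborel \<Otimes>\<^sub>M lborel))"
    using slab_int by (simp add: Bochner_Integration.integral_sum[symmetric] sum_distrib_right)
  also have "\<dots> \<le> integral\<^sup>L (lborel \<Otimes>\<^sub>M lborel) Phi"
  proof (rule integral_mono)
    show "integrable (lborel \<Otimes>\<^sub>M lborel) (\<lambda>z. (\<Sum>i=1..N. indicator (slab i) z) * Phi z)"
      unfolding sum_distrib_right by (intro Bochner_Integration.integrable_sum slab_int)
    fix z :: "real \<times> 'a"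
    have "(\<Sum>i=1..N. indicator (slab i) z) = (\<Sum>i=1..N. indicator {(real i - 1) * dt<..<real i * dt} (fst z) :: real)"
      by (cases z) (simp add: slab_def indicator_def)
    also have "\<dots> \<le> 1" by (rule sum_indicator_time_slabs_le_1[OF dt])
    finally show "(\<Sum>i=1..N. indicator (slab i) z) * Phi z \<le> Phi z"
      using nn[of z] by (intro mult_left_le_one_le sum_nonneg) auto
  qed (rule int)
  finally show ?thesis by (simp add: slab_def)
qed

lemma telescoped_sum_le:
  fixes e s r :: "nat \<Rightarrow> real"
  assumes step: "\<And>i. i \<in> {1..N} \<Longrightarrow> e i - e (i - 1) + s i \<le> r i" and "k \<le> N"
  shows "e k - e 0 + (\<Sum>i=1..k. s i) \<le> (\<Sum>i=1..k. r i)"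
  using \<open>k \<le> N\<close>
proof (induction k)
  case 0
  then show ?case by simp
next
  case (Suc k)
  with step[of "Suc k"] show ?case by simp
qed

lemma discrete_energy_bound:
  fixes e d A R :: "nat \<Rightarrow> real" and dt T S :: real
  assumes N: "N \<ge> 1" and dt: "dt > 0" and NT: "real N * dt = T"
    and step: "\<And>i. i \<in> {1..N} \<Longrightarrow>
      e i - e (i - 1) + d i + 2 * dt * A i \<le> 2 * T * R i + dt / (2 * T) * e i"
    and e_nn: "\<And>i. 0 \<le> e i" and d_nn: "\<And>i. 0 \<le> d i" and A_nn: "\<And>i. 0 \<le> A i"
    and R_nn: "\<And>i. 0 \<le> R i" and R_sum: "(\<Sum>i=1..N. R i) \<le> S"
  shows "(MAX i\<in>{1..N}. e i) + (\<Sum>i=1..N. d i) + dt * (\<Sum>i=1..N. A i) \<le> 8 * (e 0 + T * S)"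
proof -
  have T: "T > 0" using N dt NT by (metis of_nat_0_less_iff less_le_trans zero_less_one zero_less_mult_iff)
  define M where "M = (MAX i\<in>{1..N}. e i)"
  have e_M: "e i \<le> M" if "i \<in> {1..N}" for i unfolding M_def using that by (intro Max_ge) auto
  have "M \<in> e ` {1..N}" unfolding M_def using N by (intro Max_in) auto
  then obtain kM where kM: "kM \<in> {1..N}" "e kM = M" by auto
  have key: "e k + (\<Sum>i=1..k. d i + 2 * dt * A i) \<le> e 0 + 2 * T * S + M / 2" if k: "k \<le> N" for k
  proof -
    have "(\<Sum>i=1..k. R i) \<le> (\<Sum>i=1..N. R i)" using k R_nn by (intro sum_mono2) auto
    hence R_k: "2 * T * (\<Sum>i=1..k. R i) \<le> 2 * T * S" using R_sum T by simp
    have "(\<Sum>i=1..k. e i) \<le> (\<Sum>i=1..N. e i)" using k e_nn by (intro sum_mono2) auto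
    also have "\<dots> \<le> real N * M" using e_M sum_mono[of "{1..N}" e "\<lambda>_. M"] by simp
    finally have "dt / (2 * T) * (\<Sum>i=1..k. e i) \<le> dt / (2 * T) * (real N * M)"
      using dt T by (intro mult_left_mono) auto
    also have "\<dots> = M / 2" using NT T by (simp add: field_simps)
    finally have e_k: "dt / (2 * T) * (\<Sum>i=1..k. e i) \<le> M / 2" .
    have "e k - e 0 + (\<Sum>i=1..k. d i + 2 * dt * A i) \<le> (\<Sum>i=1..k. 2 * T * R i + dt / (2 * T) * e i)"
      using step k by (intro telescoped_sum_le) (simp_all add: algebra_simps)
    also have "\<dots> = 2 * T * (\<Sum>i=1..k. R i) + dt / (2 * T) * (\<Sum>i=1..k. e i)"
      by (simp add: sum.distrib sum_distrib_left)
    finally show ?thesis using R_k e_k by linarith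
  qed
  have dA_nn: "0 \<le> (\<Sum>i=1..k. d i + 2 * dt * A i)" for k
    using d_nn A_nn dt by (intro sum_nonneg add_nonneg_nonneg) simp_all
  have M_le: "M \<le> 2 * e 0 + 4 * T * S" using key[of kM] kM dA_nn[of kM] by auto
  have "(\<Sum>i=1..N. d i) + dt * (\<Sum>i=1..N. A i) \<le> (\<Sum>i=1..N. d i + 2 * dt * A i)"
    using dt A_nn sum_nonneg[of "{1..N}" A] by (simp add: sum.distrib sum_distrib_left[symmetric])
  also have "\<dots> \<le> e 0 + 2 * T * S + M / 2" using key[of N] e_nn[of N] by auto
  finally show ?thesis using M_le e_nn[of 0] T R_sum sum_nonneg[of "{1..N}" R] R_nn
    unfolding M_def by (simp add: algebra_simps)
qed

lemma simplicial_subdivision_convex_cover: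
  assumes "simplicial_subdivision \<T> \<Omega> h"
  shows "finite \<T>" "\<forall>S\<in>\<T>. convex S" "\<Omega> \<subseteq> \<Union>\<T>"
  using assms closure_subset[of \<Omega>]
  by (auto simp: simplicial_subdivision_def triangulation_def intro: convex_simplex)

lemma fd_scheme_step_energy_le:
  fixes \<Omega> :: "(real^'n) set" and u :: "nat \<Rightarrow> real^'n \<Rightarrow> real^'m"
    and F :: "real \<Rightarrow> real^'n \<Rightarrow> real^'m" and a :: "real^'n^'m \<Rightarrow> real^'n^'m" and B :: "real^'m^'m"
    and T :: real
  defines "Phi \<equiv> \<lambda>z. indicator (QT T \<Omega>) z * (norm (F (fst z) (snd z)))\<^sup>2"
  assumes bd: "bounded \<Omega>" and Om: "\<Omega> \<in> sets lebesgue"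
    and fin: "finite \<T>" and cv: "\<forall>S\<in>\<T>. convex S" and cov: "\<Omega> \<subseteq> \<Union>\<T>"
    and T: "T > 0" and dt: "dt > 0" and NT: "real N * dt = T" and i: "i \<in> {1..N}"
    and Vi: "Vhm \<T> \<Omega> (u i)" and Vi': "Vhm \<T> \<Omega> (u (i - 1))" and B_mon: "\<And>v. (B *v v) \<bullet> v \<ge> 0"
    and F_meas: "(\<lambda>z. indicator (QT T \<Omega>) z *\<^sub>R (case z of (t, x) \<Rightarrow> F t x))
      \<in> borel_measurable (lborel \<Otimes>\<^sub>M lborel)"
    and Phi_int: "integrable (lborel \<Otimes>\<^sub>M lborel) Phi"
    and sch: "fd_scheme \<T> \<Omega> a B F dt N u"
  shows "L2sq \<Omega> (u i) - L2sq \<Omega> (u (i - 1)) + L2sq \<Omega> (\<lambda>x. u i x - u (i - 1) x)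
      + 2 * dt * (LINT x:\<Omega>|lebesgue. a (jacobian (u i) (at x)) \<bullet> jacobian (u i) (at x))
    \<le> 2 * T * (\<integral>z. indicator ({(real i - 1) * dt<..<real i * dt} \<times> UNIV) z * Phi z
                   \<partial>(lborel \<Otimes>\<^sub>M lborel))
      + dt / (2 * T) * L2sq \<Omega> (u i)"
    (is "?energy \<le> 2 * T * ?R + _")
proof -
  have lm: "\<Omega> \<in> lmeasurable" using bd Om by (simp add: bounded_set_imp_lmeasurable)
  have "(LINT x:\<Omega>|lebesgue. ((1 / dt) *\<^sub>R (u i x - u (i - 1) x)) \<bullet> u i x
        + a (jacobian (u i) (at x)) \<bullet> jacobian (u i) (at x) + (B *v u i x) \<bullet> u i x)
      = (LINT x:\<Omega>|lebesgue. F_avg F dt i x \<bullet> u i x)"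
    using sch[unfolded fd_scheme_def, rule_format, of "i - 1", OF _ Vi] i
    by (auto simp: Suc_diff_le simp del: scaleR_diff_right inner_diff_left)
  from implicit_euler_energy_step[OF Vhm_continuous[OF Vi] Vhm_continuous[OF Vi'] bd Om dt B_mon
      Vhm_jacobian_set_integrable[OF Vi fin cv cov lm] this]
  have energy: "?energy \<le> 2 * dt * (LINT x:\<Omega>|lebesgue. F_avg F dt i x \<bullet> u i x)" .
  have "real i * dt \<le> T" using i dt by (simp flip: NT)
  from F_avg_inner_set_integral_le[OF F_meas Phi_int[unfolded Phi_def] Vhm_continuous[OF Vi] bd Om
      _ dt this, of "2 * T"] i T
  have "(LINT x:\<Omega>|lebesgue. F_avg F dt i x \<bullet> u i x) \<le> T / dt * ?R + L2sq \<Omega> (u i) / (4 * T)"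
    by (simp add: Phi_def)
  hence "2 * dt * (LINT x:\<Omega>|lebesgue. F_avg F dt i x \<bullet> u i x)
      \<le> 2 * dt * (T / dt * ?R + L2sq \<Omega> (u i) / (4 * T))"
    using dt by simp
  also have "\<dots> = 2 * T * ?R + dt / (2 * T) * L2sq \<Omega> (u i)" using dt T by (simp add: field_simps)
  finally show ?thesis using energy by linarith
qed

lemma fd_scheme_energy_estimate:
  fixes \<Omega> :: "(real^'n) set" and u :: "nat \<Rightarrow> real^'n \<Rightarrow> real^'m"
    and F :: "real \<Rightarrow> real^'n \<Rightarrow> real^'m" and a :: "real^'n^'m \<Rightarrow> real^'n^'m" and B :: "real^'m^'m"
  assumes bd: "bounded \<Omega>" and Om: "\<Omega> \<in> sets lebesgue"
    and fin: "finite \<T>" and cv: "\<forall>S\<in>\<T>. convex S" and cov: "\<Omega> \<subseteq> \<Union>\<T>"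
    and T: "T > 0" and N: "N \<ge> 1" and V: "\<And>i. i \<le> N \<Longrightarrow> Vhm \<T> \<Omega> (u i)"
    and B_mon: "\<And>v. (B *v v) \<bullet> v \<ge> 0" and a_nn: "\<And>\<xi>. 0 \<le> a \<xi> \<bullet> \<xi>"
    and F_L2: "Lp_on (lborel \<Otimes>\<^sub>M lborel) (QT T \<Omega>) 2 (\<lambda>(t, x). F t x)"
    and sch: "fd_scheme \<T> \<Omega> a B F (T / real N) N u"
  shows "(MAX i\<in>{1..N}. L2sq \<Omega> (u i)) + (\<Sum>i=1..N. L2sq \<Omega> (\<lambda>x. u i x - u (i - 1) x))
      + (T / real N) * (\<Sum>i=1..N. LINT x:\<Omega>|lebesgue. a (jacobian (u i) (at x)) \<bullet> jacobian (u i) (at x))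
    \<le> 8 * (L2sq \<Omega> (u 0) + T * (LINT z:QT T \<Omega>|(lborel \<Otimes>\<^sub>M lborel). (norm (F (fst z) (snd z)))\<^sup>2))"
proof -
  define dt where "dt = T / real N"
  have dt: "dt > 0" and NT: "real N * dt = T" using N T by (auto simp: dt_def)
  define Phi where "Phi = (\<lambda>z. indicator (QT T \<Omega>) z * (norm (F (fst z) (snd z)))\<^sup>2)"
  have F_meas: "(\<lambda>z. indicator (QT T \<Omega>) z *\<^sub>R (case z of (t, x) \<Rightarrow> F t x))
      \<in> borel_measurable (lborel \<Otimes>\<^sub>M lborel)"
    using F_L2 by (simp add: Lp_on_def)
  have "(\<lambda>z. indicator (QT T \<Omega>) z * norm ((\<lambda>(t, x). F t x) z) powr 2) = Phi"
    by (auto simp: Phi_def fun_eq_iff split: prod.split)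
  hence Phi_int: "integrable (lborel \<Otimes>\<^sub>M lborel) Phi"
    using F_L2 by (simp add: Lp_on_def)
  have Phi_nn: "0 \<le> Phi z" for z by (simp add: Phi_def)
  define e where "e i = L2sq \<Omega> (u i)" for i
  define d where "d i = L2sq \<Omega> (\<lambda>x. u i x - u (i - 1) x)" for i
  define A where "A i = (LINT x:\<Omega>|lebesgue. a (jacobian (u i) (at x)) \<bullet> jacobian (u i) (at x))" for i
  define R where "R i = (\<integral>z. indicator ({(real i - 1) * dt<..<real i * dt} \<times> UNIV) z * Phi z
    \<partial>(lborel \<Otimes>\<^sub>M lborel))" for i :: nat
  have "(MAX i\<in>{1..N}. e i) + (\<Sum>i=1..N. d i) + dt * (\<Sum>i=1..N. A i)
      \<le> 8 * (e 0 + T * integral\<^sup>L (lborel \<Otimes>\<^sub>M lborel) Phi)"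
  proof (rule discrete_energy_bound[where e = e and d = d and A = A and R = R, OF N dt NT])
    show "e i - e (i - 1) + d i + 2 * dt * A i \<le> 2 * T * R i + dt / (2 * T) * e i"
      if i: "i \<in> {1..N}" for i
    proof -
      have "Vhm \<T> \<Omega> (u i)" "Vhm \<T> \<Omega> (u (i - 1))" using V i by auto
      from fd_scheme_step_energy_le[OF bd Om fin cv cov T dt NT i this B_mon F_meas Phi_int[unfolded Phi_def]] sch
      show ?thesis by (simp add: e_def d_def A_def R_def Phi_def dt_def)
    qed
    show "(\<Sum>i=1..N. R i) \<le> integral\<^sup>L (lborel \<Otimes>\<^sub>M lborel) Phi"
      unfolding R_def by (rule sum_time_slab_integrals_le[OF Phi_int Phi_nn dt])
    show "0 \<le> A i" for i
      unfolding A_def set_lebesgue_integral_def using a_nn by (intro integral_nonneg_AE AE_I2) simp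
    show "0 \<le> R i" for i unfolding R_def using Phi_nn by (intro integral_nonneg_AE AE_I2) simp
  qed (auto simp: e_def d_def L2sq_nonneg)
  thus ?thesis by (simp add: e_def d_def A_def dt_def Phi_def set_lebesgue_integral_def)
qed

lemma norm_power2_le_twice:
  fixes y z :: "'a::real_normed_vector"
  shows "(norm y)\<^sup>2 \<le> 2 * (norm (y - z))\<^sup>2 + 2 * (norm z)\<^sup>2"
proof -
  have "(norm y)\<^sup>2 \<le> (norm (y - z) + norm z)\<^sup>2"
    using norm_triangle_ineq[of "y - z" z] by (intro power_mono) auto
  also have "\<dots> \<le> 2 * (norm (y - z))\<^sup>2 + 2 * (norm z)\<^sup>2"
    using sum_power2_ge_zero[of "norm (y - z) - norm z" 0] by (simp add: power2_eq_square algebra_simps)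
  finally show ?thesis .
qed

lemma L2sq_le_twice:
  fixes v f :: "real^'n \<Rightarrow> real^'m"
  assumes f: "Lp_on lebesgue \<Omega> 2 f" and vc: "continuous_on UNIV v"
    and bd: "bounded \<Omega>" and Om: "\<Omega> \<in> sets lebesgue"
  shows "L2sq \<Omega> v \<le> 2 * L2sq \<Omega> (\<lambda>x. v x - f x) + 2 * L2sq \<Omega> f"
proof -
  have f_meas: "(\<lambda>x. indicator \<Omega> x *\<^sub>R f x) \<in> borel_measurable lebesgue"
    and f_int: "set_integrable lebesgue \<Omega> (\<lambda>x. (norm (f x))\<^sup>2)"
    using f by (simp_all add: Lp_on_def set_integrable_def)
  have v_int: "set_integrable lebesgue \<Omega> (\<lambda>x. (norm (v x))\<^sup>2)"
    using vc by (intro set_integrable_continuous_on_bounded bd Om continuous_intros)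
  have "v \<in> borel_measurable lebesgue"
    using borel_measurable_continuous_onI[OF vc] by (intro measurable_completion) (simp add: measurable_lborel1)
  hence v_meas: "(\<lambda>x. indicator \<Omega> x *\<^sub>R v x) \<in> borel_measurable lebesgue"
    using Om by (intro borel_measurable_scaleR borel_measurable_indicator) auto
  have "(\<lambda>x. indicator \<Omega> x *\<^sub>R (norm (v x - f x))\<^sup>2)
      = (\<lambda>x. (norm (indicator \<Omega> x *\<^sub>R v x - indicator \<Omega> x *\<^sub>R f x))\<^sup>2)"
    by (auto simp: fun_eq_iff indicator_def)
  also have "\<dots> \<in> borel_measurable lebesgue"
    using measurable_compose[OF borel_measurable_diff[OF v_meas f_meas] borel_measurable_norm]
    by (rule borel_measurable_power)
  finally have vf_meas: "(\<lambda>x. indicator \<Omega> x *\<^sub>R (norm (v x - f x))\<^sup>2) \<in> borel_measurable lebesgue" .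
  have bound_int: "integrable lebesgue
      (\<lambda>x. 2 * (indicator \<Omega> x *\<^sub>R (norm (v x))\<^sup>2) + 2 * (indicator \<Omega> x *\<^sub>R (norm (f x))\<^sup>2))"
    using v_int f_int unfolding set_integrable_def
    by (intro Bochner_Integration.integrable_add integrable_mult_right)
  have "norm (indicator \<Omega> x *\<^sub>R (norm (v x - f x))\<^sup>2)
      \<le> norm (2 * (indicator \<Omega> x *\<^sub>R (norm (v x))\<^sup>2) + 2 * (indicator \<Omega> x *\<^sub>R (norm (f x))\<^sup>2))" for x
    using norm_power2_le_twice[of "v x - f x" "- f x"] by (simp add: indicator_def)
  hence vf_int: "set_integrable lebesgue \<Omega> (\<lambda>x. (norm (v x - f x))\<^sup>2)"
    unfolding set_integrable_def using Bochner_Integration.integrable_bound[OF bound_int vf_meas] by blast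
  have "L2sq \<Omega> v \<le> (LINT x:\<Omega>|lebesgue. 2 * (norm (v x - f x))\<^sup>2 + 2 * (norm (f x))\<^sup>2)"
    unfolding L2sq_def using v_int vf_int f_int norm_power2_le_twice[of "v x" "f x" for x]
    by (intro set_integral_mono) auto
  also have "\<dots> = 2 * L2sq \<Omega> (\<lambda>x. v x - f x) + 2 * L2sq \<Omega> f"
    using vf_int f_int by (simp add: L2sq_def set_integral_add)
  finally show ?thesis .
qed

lemma L2sq_eventually_bounded:
  fixes v :: "'c \<Rightarrow> real^'n \<Rightarrow> real^'m" and f :: "real^'n \<Rightarrow> real^'m"
  assumes f: "Lp_on lebesgue \<Omega> 2 f" and bd: "bounded \<Omega>" and Om: "\<Omega> \<in> sets lebesgue"
    and cont: "eventually (\<lambda>h. continuous_on UNIV (v h)) F"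
    and conv: "((\<lambda>h. L2sq \<Omega> (\<lambda>x. v h x - f x)) \<longlongrightarrow> 0) F"
  shows "eventually (\<lambda>h. L2sq \<Omega> (v h) \<le> 2 + 2 * L2sq \<Omega> f) F"
  using cont order_tendstoD(2)[OF conv zero_less_one]
proof eventually_elim
  case (elim h)
  with L2sq_le_twice[OF f _ bd Om, of "v h"] show ?case by linarith
qed

theorem lemma4p1:
  fixes \<Omega> :: "(real^'n) set" and T h0 c0 c1 :: real
    and p \<mu> :: "'m::finite \<Rightarrow> real"
    and u0 :: "real^'n \<Rightarrow> real^'m"
    and F :: "real \<Rightarrow> real^'n \<Rightarrow> real^'m"
    and B :: "real^'m^'m"
    and a :: "real^'n^'m \<Rightarrow> real^'n^'m"
    and K :: "real^'n^'m \<Rightarrow> real"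
    and \<T> :: "real \<Rightarrow> (real^'n) set set"
    and u0h :: "real \<Rightarrow> real^'n \<Rightarrow> real^'m"
  assumes Omega: "lipschitz_polytope \<Omega>"
    and T_pos: "T > 0"
    and p_gt: "\<And>i. p i > max 1 (2 * real CARD('n) / (real CARD('n) + 2))"
    and q_p: "Max (range p) - Min (range p) < 1"
    and u0_L2: "Lp_on lebesgue \<Omega> 2 u0"
    and F_Lp': "Lp_on (lborel \<Otimes>\<^sub>M lborel) (QT T \<Omega>)
                  (Min (range p) / (Min (range p) - 1)) (\<lambda>(t, x). F t x)"
    and F_L2: "Lp_on (lborel \<Otimes>\<^sub>M lborel) (QT T \<Omega>) 2 (\<lambda>(t, x). F t x)"
    and B_mon: "\<And>v. (B *v v) \<bullet> v \<ge> 0"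
    and a_loclip: "\<And>A. \<exists>r>0. \<exists>L. \<forall>X\<in>ball A r. \<forall>Y\<in>ball A r. norm (a X - a Y) \<le> L * norm (X - Y)"
    and a_K: "\<And>A. a A = K A *\<^sub>R A"
    and K_cont: "continuous_on UNIV K"
    and c0_pos: "0 < c0" and c0_c1: "c0 \<le> c1"
    and K_lower: "\<And>A. c0 * (\<Sum>i\<in>UNIV. pw ((\<mu> i)\<^sup>2 + (norm (A $ i))\<^sup>2) ((p i - 2) / 2)) \<le> K A"
    and K_upper: "\<And>A. K A \<le> c1 * (\<Sum>i\<in>UNIV. pw ((\<mu> i)\<^sup>2 + (norm (A $ i))\<^sup>2) ((p i - 2) / 2))"
    and mu_nz: "\<And>i. p i < 2 \<Longrightarrow> \<mu> i \<noteq> 0"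
    and h0_pos: "h0 > 0"
    and mesh: "\<And>h. h \<in> {0<..h0} \<Longrightarrow> simplicial_subdivision (\<T> h) \<Omega> h"
    and shape_reg: "shape_regular_family \<T> h0"
    and proj_stab: "projection_stable \<Omega> \<T> h0 (max (Max (range p)) 2) TYPE(real^'m)"
    and u0h_V: "\<And>h. h \<in> {0<..h0} \<Longrightarrow> Vhm (\<T> h) \<Omega> (u0h h)"
    and u0h_conv: "((\<lambda>h. L2sq \<Omega> (\<lambda>x. u0h h x - u0 x)) \<longlongrightarrow> 0) (at_right 0)"
  shows "(\<exists>c>0. \<forall>h\<in>{0<..h0}. \<forall>(N::nat) (u::nat \<Rightarrow> real^'n \<Rightarrow> real^'m).
            N \<ge> 1 \<longrightarrow> u 0 = u0h h \<longrightarrow> (\<forall>i\<in>{1..N}. Vhm (\<T> h) \<Omega> (u i)) \<longrightarrow>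
            fd_scheme (\<T> h) \<Omega> a B F (T / real N) N u \<longrightarrow>
              (MAX i\<in>{1..N}. L2sq \<Omega> (u i))
              + (\<Sum>i=1..N. L2sq \<Omega> (\<lambda>x. u i x - u (i - 1) x))
              + (T / real N) * (\<Sum>i=1..N. LINT x:\<Omega>|lebesgue.
                    a (jacobian (u i) (at x)) \<bullet> jacobian (u i) (at x))
              \<le> c * (L2sq \<Omega> (u0h h)
                     + T * (LINT z:QT T \<Omega>|(lborel \<Otimes>\<^sub>M lborel). (norm (F (fst z) (snd z)))\<^sup>2)))
         \<and> (\<forall>\<xi>. a \<xi> \<bullet> \<xi> \<ge> 0)
         \<and> (\<exists>C. eventually (\<lambda>h. L2sq \<Omega> (u0h h)
                     + T * (LINT z:QT T \<Omega>|(lborel \<Otimes>\<^sub>M lborel). (norm (F (fst z) (snd z)))\<^sup>2) \<le> C)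
                 (at_right 0))"
proof -
  have bd: "bounded \<Omega>" and Om: "\<Omega> \<in> sets lebesgue"
    using Omega by (auto simp: lipschitz_polytope_def lipschitz_domain_def)
  have a_nn: "0 \<le> a \<xi> \<bullet> \<xi>" for \<xi>
    using order_trans[OF mult_nonneg_nonneg[OF _ sum_nonneg] K_lower[of \<xi>]] c0_pos
    by (simp add: a_K pw_def)
  define S where "S = (LINT z:QT T \<Omega>|(lborel \<Otimes>\<^sub>M lborel). (norm (F (fst z) (snd z)))\<^sup>2)"
  have est: "(MAX i\<in>{1..N}. L2sq \<Omega> (u i)) + (\<Sum>i=1..N. L2sq \<Omega> (\<lambda>x. u i x - u (i - 1) x))
      + (T / real N) * (\<Sum>i=1..N. LINT x:\<Omega>|lebesgue. a (jacobian (u i) (at x)) \<bullet> jacobian (u i) (at x))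
    \<le> 8 * (L2sq \<Omega> (u0h h) + T * S)"
    if h: "h \<in> {0<..h0}" and N: "1 \<le> N" and u0: "u 0 = u0h h"
      and V: "\<forall>i\<in>{1..N}. Vhm (\<T> h) \<Omega> (u i)" and sch: "fd_scheme (\<T> h) \<Omega> a B F (T / real N) N u"
    for h N u
  proof -
    have "Vhm (\<T> h) \<Omega> (u i)" if "i \<le> N" for i
      using that V u0 u0h_V[OF h] by (cases "i = 0") auto
    from fd_scheme_energy_estimate[OF bd Om simplicial_subdivision_convex_cover[OF mesh[OF h]]
        T_pos N this B_mon a_nn F_L2 sch]
    show ?thesis by (simp add: u0 S_def)
  qed
  have "eventually (\<lambda>h. h \<in> {0<..h0}) (at_right (0::real))"
    using eventually_at_right_real[OF h0_pos] by (rule eventually_mono) auto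
  hence "eventually (\<lambda>h. L2sq \<Omega> (u0h h) \<le> 2 + 2 * L2sq \<Omega> u0) (at_right 0)"
    by (intro L2sq_eventually_bounded[OF u0_L2 bd Om _ u0h_conv])
      (auto elim!: eventually_mono intro: Vhm_continuous[OF u0h_V])
  hence init: "eventually (\<lambda>h. L2sq \<Omega> (u0h h) + T * S \<le> 2 + 2 * L2sq \<Omega> u0 + T * S) (at_right 0)"
    by (rule eventually_mono) simp
  show ?thesis
    unfolding S_def[symmetric]
  proof (intro conjI)
    show "\<forall>\<xi>. 0 \<le> a \<xi> \<bullet> \<xi>" using a_nn by blast
    show "\<exists>C. eventually (\<lambda>h. L2sq \<Omega> (u0h h) + T * S \<le> C) (at_right 0)" using init by blast
  qed (use est in \<open>intro exI[of _ "8::real"] conjI ballI allI impI; simp\<close>)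
qed

end
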